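(* Let $n$ be odd and let $P$ be a generic $n$-gon in $\mathbb{R}^3$. If $P$ is not regular, then its mirror image (image under a reflection of $\mathbb{R}^3$ in a plane) is regular.
   Context: For a closed polygon $P=A_1\ldots A_n$ in $\mathbb{R}^3$ put $v_1=\overline{A_1A_2},\ldots,v_n=\overline{A_nA_1}$, indices cyclic mod $n$. $P$ is generic if any two consecutive $v_i,v_{i+1}$ are not collinear and any three consecutive $v_i,v_{i+1},v_{i+2}$ are not coplanar. A support system of $P$ is a tuple $u_1,\ldots,u_n$ of vectors with $[u_i,u_{i+1}]=v_{i+1}$ for all $i$ (cyclically; $[\cdot,\cdot]$ the cross product). A generic polygon is regular if it has a support system. *)

theory Defs
  imports "HOL-Analysis.Analysis" "HOL-Analysis.Cross3"
begin

text \<open>A closed polygon with n vertices is given by A :: nat => real^3, where only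
  A 0, ..., A (n-1) matter (vertex A_{i+1} of the paper is A i); all indices are
  taken cyclically mod n. The edge vector v_{i+1} of the paper is edge_vec A n i.\<close>

definition edge_vec :: "(nat \<Rightarrow> real^3) \<Rightarrow> nat \<Rightarrow> nat \<Rightarrow> real^3" where
  "edge_vec A n i = A (Suc i mod n) - A (i mod n)"

definition generic_polygon :: "(nat \<Rightarrow> real^3) \<Rightarrow> nat \<Rightarrow> bool" where
  "generic_polygon A n \<longleftrightarrow>
     (\<forall>i. \<not> collinear {0, edge_vec A n i, edge_vec A n (Suc i)}) \<and>
     (\<forall>i. \<not> coplanar {0, edge_vec A n i, edge_vec A n (Suc i), edge_vec A n (Suc (Suc i))})"

definition support_system :: "(nat \<Rightarrow> real^3) \<Rightarrow> nat \<Rightarrow> (nat \<Rightarrow> real^3) \<Rightarrow> bool" where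
  "support_system A n u \<longleftrightarrow>
     (\<forall>i. cross3 (u (i mod n)) (u (Suc i mod n)) = edge_vec A n (Suc i))"

definition regular_polygon :: "(nat \<Rightarrow> real^3) \<Rightarrow> nat \<Rightarrow> bool" where
  "regular_polygon A n \<longleftrightarrow> generic_polygon A n \<and> (\<exists>u. support_system A n u)"

definition plane_reflection :: "real^3 \<Rightarrow> real \<Rightarrow> real^3 \<Rightarrow> real^3" where
  "plane_reflection w c x = x - (2 * (w \<bullet> x - c) / (w \<bullet> w)) *\<^sub>R w"

end

theory Submission
  imports Defs
begin

text \<open>Write \<open>t_k = [v_k, v_{k+1}, v_{k+2}]\<close>, nonzero for a generic polygon. Since
  \<open>(v_k \<times> v_{k+1}) \<times> (v_{k+1} \<times> v_{k+2}) = t_k v_{k+1}\<close>, the ansatz \<open>u_k = l_k (v_k \<times> v_{k+1})\<close>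
  is a support system as soon as \<open>l_k l_{k+1} = 1/t_k\<close> cyclically, and for odd \<open>n\<close> this
  system is solvable when \<open>\<Prod> t_k > 0\<close>. So a generic polygon that is not regular has
  \<open>\<Prod> t_k < 0\<close>. A reflection reverses orientation, hence negates every \<open>t_k\<close>, and for odd
  \<open>n\<close> the product for the mirror image is positive.\<close>

unbundle cross3_syntax
unbundle no set_product_syntax

lemma triple_product_cramer:
  fixes a b c x :: "real^3"
  shows "((a \<times> b) \<bullet> c) *\<^sub>R x = ((x \<times> b) \<bullet> c) *\<^sub>R a + ((a \<times> x) \<bullet> c) *\<^sub>R b + ((a \<times> b) \<bullet> x) *\<^sub>R c"
  by (simp add: cross3_simps) (auto simp: forall_3 algebra_simps)

lemma triple_product_rotate:
  fixes a b c :: "real^3"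
  shows "a \<bullet> (b \<times> c) = (a \<times> b) \<bullet> c"
  by (simp add: cross3_simps)

lemma cross_cross_shared:
  fixes a b c :: "real^3"
  shows "(a \<times> b) \<times> (b \<times> c) = ((a \<times> b) \<bullet> c) *\<^sub>R b"
  by (simp add: cross_cross_det triple_product_rotate flip: dot_cross_det)

lemma coplanar_if_triple_product_eq_0:
  fixes a b c :: "real^3"
  assumes "(a \<times> b) \<bullet> c = 0"
  shows "coplanar {0, a, b, c}"
proof (cases "a \<times> b = 0")
  case True
  then have "collinear {0, a, b}"
    by (simp add: cross_eq_0)
  then obtain p q where "{0, a, b} \<subseteq> affine hull {p, q}"
    unfolding collinear_affine_hull by blast
  moreover have "affine hull {p, q} \<subseteq> affine hull {p, q, c}"
    by (rule hull_mono) blast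
  moreover have "c \<in> affine hull {p, q, c}"
    by (rule hull_inc) blast
  ultimately have "{0, a, b, c} \<subseteq> affine hull {p, q, c}"
    by blast
  then show ?thesis
    unfolding coplanar_def by blast
next
  case False
  define N where "N = a \<times> b"
  have "N \<bullet> N \<noteq> 0"
    using False by (simp add: N_def)
  have "(N \<bullet> N) *\<^sub>R c = ((c \<times> b) \<bullet> N) *\<^sub>R a + ((a \<times> c) \<bullet> N) *\<^sub>R b"
    using triple_product_cramer[of a b N c] assms by (simp add: N_def)
  then have "(N \<bullet> N) *\<^sub>R c \<in> span {0, a, b}"
    by (metis span_add span_mul span_base insertCI)
  then have "inverse (N \<bullet> N) *\<^sub>R (N \<bullet> N) *\<^sub>R c \<in> span {0, a, b}"
    by (rule span_mul)
  then have "c \<in> span {0, a, b}"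
    using \<open>N \<bullet> N \<noteq> 0\<close> by simp
  then have "{0, a, b, c} \<subseteq> affine hull {0, a, b}"
    by (simp add: affine_hull_span_0 hull_inc span_base span_zero)
  then show ?thesis
    unfolding coplanar_def by blast
qed

lemma triple_product_shift:
  fixes a b c w :: "real^3"
  shows "((a - \<alpha> *\<^sub>R w) \<times> (b - \<beta> *\<^sub>R w)) \<bullet> (c - \<gamma> *\<^sub>R w)
    = (a \<times> b) \<bullet> c - \<alpha> * ((w \<times> b) \<bullet> c) - \<beta> * ((a \<times> w) \<bullet> c) - \<gamma> * ((a \<times> b) \<bullet> w)"
proof -
  have "(a - \<alpha> *\<^sub>R w) \<times> (b - \<beta> *\<^sub>R w) = a \<times> b - \<alpha> *\<^sub>R (w \<times> b) - \<beta> *\<^sub>R (a \<times> w)"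
    by (simp add: cross3_simps)
  then show ?thesis
    by (simp add: inner_diff_left inner_diff_right dot_cross_self)
qed

definition mirror :: "real^3 \<Rightarrow> real^3 \<Rightarrow> real^3" where
  "mirror w x = x - (2 * (w \<bullet> x) / (w \<bullet> w)) *\<^sub>R w"

lemma linear_mirror: "linear (mirror w)"
  unfolding mirror_def
  by (rule linearI) (simp_all add: add_divide_distrib algebra_simps)

lemma mirror_mirror: "w \<noteq> 0 \<Longrightarrow> mirror w (mirror w x) = x"
  unfolding mirror_def by (simp add: algebra_simps)

lemma inj_mirror: "w \<noteq> 0 \<Longrightarrow> inj (mirror w)"
  by (metis injI mirror_mirror)

lemma triple_product_mirror:
  fixes a b c w :: "real^3"
  assumes "w \<noteq> 0"
  shows "(mirror w a \<times> mirror w b) \<bullet> mirror w c = - ((a \<times> b) \<bullet> c)"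
proof -
  have "(w \<bullet> w) * ((a \<times> b) \<bullet> c)
      = (w \<bullet> a) * ((w \<times> b) \<bullet> c) + (w \<bullet> b) * ((a \<times> w) \<bullet> c) + (w \<bullet> c) * ((a \<times> b) \<bullet> w)"
    using arg_cong[OF triple_product_cramer[of a b c w], of "inner w"]
    by (simp add: algebra_simps)
  then show ?thesis
    using assms unfolding mirror_def triple_product_shift by (simp add: field_simps)
qed

lemma edge_vec_plane_reflection:
  "edge_vec (\<lambda>i. plane_reflection w c (A i)) n k = mirror w (edge_vec A n k)"
  unfolding edge_vec_def plane_reflection_def mirror_def
  by (simp add: algebra_simps diff_divide_distrib)

fun alternating_quotients :: "(nat \<Rightarrow> real) \<Rightarrow> real \<Rightarrow> nat \<Rightarrow> real" where
  "alternating_quotients c L 0 = L"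
| "alternating_quotients c L (Suc k) = c k / alternating_quotients c L k"

lemma alternating_quotients_even:
  "alternating_quotients c L (2 * j) = L * (\<Prod>i<j. c (2 * i + 1) / c (2 * i))"
  by (induction j) (simp_all add: field_simps)

lemma alternating_quotients_nonzero:
  "L \<noteq> 0 \<Longrightarrow> \<forall>i<k. c i \<noteq> 0 \<Longrightarrow> alternating_quotients c L k \<noteq> 0"
  by (induction k) auto

lemma prod_lessThan_double:
  fixes c :: "nat \<Rightarrow> 'a::comm_monoid_mult"
  shows "(\<Prod>k<2 * m. c k) = (\<Prod>i<m. c (2 * i) * c (2 * i + 1))"
  by (induction m) (simp_all add: mult.assoc)

lemma cyclic_product_equation_solvable:
  fixes c :: "nat \<Rightarrow> real"
  assumes "odd n" and nonzero: "\<forall>k<n. c k \<noteq> 0" and pos: "(\<Prod>k<n. c k) > 0"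
  shows "\<exists>l. \<forall>k<n. l k * l (Suc k mod n) = c k"
proof -
  obtain m where n: "n = 2 * m + 1"
    using \<open>odd n\<close> oddE by blast
  \<comment> \<open>\<open>r\<close> is the value \<open>l\<^sub>0\<^sup>2\<close> forced by running once around the cycle.\<close>
  define r where "r = c (2 * m) * (\<Prod>i<m. c (2 * i) / c (2 * i + 1))"
  define Q where "Q = (\<Prod>i<m. c (2 * i + 1))"
  have "r * (Q * Q) = c (2 * m) * (\<Prod>i<m. c (2 * i) / c (2 * i + 1) * c (2 * i + 1) * c (2 * i + 1))"
    unfolding r_def Q_def by (simp only: prod.distrib mult_ac)
  also have "\<dots> = c (2 * m) * (\<Prod>i<m. c (2 * i) * c (2 * i + 1))"
    using nonzero n by (intro arg_cong[where f = "(*) _"] prod.cong) auto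
  also have "\<dots> = (\<Prod>k<n. c k)"
    by (simp add: n prod_lessThan_double)
  finally have "r > 0"
    using pos by (metis mult_nonpos_nonneg not_le zero_le_square)
  define L where "L = sqrt r"
  have LL: "L * L = r" and "L \<noteq> 0"
    using \<open>r > 0\<close> by (simp_all add: L_def)
  define l where "l = alternating_quotients c L"
  have "l k * l (Suc k mod n) = c k" if "k < n" for k
  proof (cases "Suc k < n")
    case True
    then show ?thesis
      using alternating_quotients_nonzero[OF \<open>L \<noteq> 0\<close>, where c = c and k = k] nonzero that by (simp add: l_def)
  next
    case False
    then have k: "k = 2 * m"
      using that n by simp
    then have "Suc k mod n = 0"
      using n by simp
    with k have "l k * l (Suc k mod n) = L * L * (\<Prod>i<m. c (2 * i + 1) / c (2 * i))"
      by (simp add: l_def alternating_quotients_even)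
    also have "\<dots> = c (2 * m) * (\<Prod>i<m. c (2 * i) / c (2 * i + 1) * (c (2 * i + 1) / c (2 * i)))"
      unfolding LL r_def by (simp only: prod.distrib mult_ac)
    also have "\<dots> = c k"
      using nonzero by (simp add: k n)
    finally show ?thesis .
  qed
  then show ?thesis
    by blast
qed

definition edge_triple :: "(nat \<Rightarrow> real^3) \<Rightarrow> nat \<Rightarrow> nat \<Rightarrow> real" where
  "edge_triple A n k = (edge_vec A n k \<times> edge_vec A n (Suc k)) \<bullet> edge_vec A n (Suc (Suc k))"

lemma edge_vec_mod: "edge_vec A n (k mod n) = edge_vec A n k"
  unfolding edge_vec_def by (simp add: mod_Suc_eq)

lemma edge_triple_mod: "edge_triple A n (k mod n) = edge_triple A n k"
  unfolding edge_triple_def by (metis edge_vec_mod mod_Suc_eq)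

lemma edge_triple_nonzero_if_generic: "generic_polygon A n \<Longrightarrow> edge_triple A n k \<noteq> 0"
  unfolding generic_polygon_def edge_triple_def using coplanar_if_triple_product_eq_0 by blast

lemma support_system_if_prod_edge_triple_pos:
  assumes "odd n" and nonzero: "\<forall>k. edge_triple A n k \<noteq> 0"
    and "(\<Prod>k<n. edge_triple A n k) > 0"
  shows "\<exists>u. support_system A n u"
proof -
  have "(\<Prod>k<n. 1 / edge_triple A n k) > 0"
    using assms(3) by (simp add: prod_dividef)
  then obtain l where l: "\<forall>k<n. l k * l (Suc k mod n) = 1 / edge_triple A n k"
    using cyclic_product_equation_solvable[OF \<open>odd n\<close>, of "\<lambda>k. 1 / edge_triple A n k"] nonzero
    by auto
  define e where "e = edge_vec A n"
  define u where "u i = l (i mod n) *\<^sub>R (e i \<times> e (Suc i))" for i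
  have u_mod: "u (i mod n) = u i" for i
    unfolding u_def e_def by (metis edge_vec_mod mod_Suc_eq mod_mod_trivial)
  have "u (i mod n) \<times> u (Suc i mod n) = e (Suc i)" for i
  proof -
    have "n > 0"
      using \<open>odd n\<close> by (simp add: odd_pos)
    then have "l (i mod n) * l (Suc (i mod n) mod n) = 1 / edge_triple A n (i mod n)"
      using l by simp
    then have l_i: "l (i mod n) * l (Suc i mod n) * edge_triple A n i = 1"
      using nonzero by (simp add: mod_Suc_eq edge_triple_mod)
    have "u (i mod n) \<times> u (Suc i mod n) = u i \<times> u (Suc i)"
      by (simp add: u_mod mod_Suc_eq)
    also have "\<dots> = (l (i mod n) * l (Suc i mod n) * edge_triple A n i) *\<^sub>R e (Suc i)"
      unfolding u_def by (simp add: cross_mult_left cross_mult_right cross_cross_shared edge_triple_def e_def)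
    finally show ?thesis
      by (simp add: l_i)
  qed
  then have "support_system A n u"
    unfolding support_system_def e_def by blast
  then show ?thesis
    by blast
qed

lemma edge_triple_plane_reflection:
  "w \<noteq> 0 \<Longrightarrow> edge_triple (\<lambda>i. plane_reflection w c (A i)) n k = - edge_triple A n k"
  unfolding edge_triple_def edge_vec_plane_reflection by (rule triple_product_mirror)

lemma generic_polygon_plane_reflection:
  assumes "w \<noteq> 0" and "generic_polygon A n"
  shows "generic_polygon (\<lambda>i. plane_reflection w c (A i)) n" (is "generic_polygon ?B n")
  unfolding generic_polygon_def
proof (intro conjI allI)
  fix k
  have "edge_triple ?B n k \<noteq> 0"
    using assms by (simp add: edge_triple_plane_reflection edge_triple_nonzero_if_generic)
  then show "\<not> collinear {0, edge_vec ?B n k, edge_vec ?B n (Suc k)}"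
    by (auto simp: edge_triple_def simp flip: cross_eq_0)
  have image: "{0, edge_vec ?B n k, edge_vec ?B n (Suc k), edge_vec ?B n (Suc (Suc k))}
      = mirror w ` {0, edge_vec A n k, edge_vec A n (Suc k), edge_vec A n (Suc (Suc k))}"
    by (simp add: edge_vec_plane_reflection linear_0[OF linear_mirror])
  have "\<not> coplanar {0, edge_vec A n k, edge_vec A n (Suc k), edge_vec A n (Suc (Suc k))}"
    using assms(2) unfolding generic_polygon_def by blast
  then show "\<not> coplanar {0, edge_vec ?B n k, edge_vec ?B n (Suc k), edge_vec ?B n (Suc (Suc k))}"
    unfolding image coplanar_linear_image_eq[OF linear_mirror inj_mirror[OF assms(1)]] .
qed

theorem mainTheorem2:
  fixes A :: "nat \<Rightarrow> real^3" and n :: nat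
  assumes "odd n"
    and "generic_polygon A n"
    and "\<not> regular_polygon A n"
  shows "\<forall>w c. w \<noteq> 0 \<longrightarrow> regular_polygon (\<lambda>i. plane_reflection w c (A i)) n"
proof (intro allI impI)
  fix w :: "real^3" and c :: real
  assume "w \<noteq> 0"
  let ?B = "\<lambda>i. plane_reflection w c (A i)"
  have nonzero: "\<forall>k. edge_triple A n k \<noteq> 0"
    using assms(2) by (simp add: edge_triple_nonzero_if_generic)
  have "\<not> (\<Prod>k<n. edge_triple A n k) > 0"
    using support_system_if_prod_edge_triple_pos[OF \<open>odd n\<close> nonzero] assms(2,3)
    unfolding regular_polygon_def by blast
  moreover have "(\<Prod>k<n. edge_triple A n k) \<noteq> 0"
    using nonzero by simp
  moreover have "(\<Prod>k<n. edge_triple ?B n k) = - (\<Prod>k<n. edge_triple A n k)"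
    using \<open>w \<noteq> 0\<close> \<open>odd n\<close> by (simp add: edge_triple_plane_reflection prod_uminus)
  ultimately have "(\<Prod>k<n. edge_triple ?B n k) > 0"
    by linarith
  moreover have "generic_polygon ?B n"
    using \<open>w \<noteq> 0\<close> assms(2) by (rule generic_polygon_plane_reflection)
  ultimately show "regular_polygon ?B n"
    unfolding regular_polygon_def
    using support_system_if_prod_edge_triple_pos[OF \<open>odd n\<close>] edge_triple_nonzero_if_generic by blast
qed

end
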